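(* Let $f_{AH}(x)=\frac{x+1}{2}-\frac{2x}{x+1}$ for $x\in(0,\infty)$, let $f_{AH}^*(u)=u\,f_{AH}\!\left(\frac{1-u}{u}\right)$ for $u\in(0,1)$, extended by continuity to $[0,1]$ (explicitly $f_{AH}^*(u)=\frac12(2u-1)^2$), and define $\overline M_{AH}(C_1,C_2)=E_X\{f_{AH}^*(P(C_2\mid x))\}$. Then $$P_e\le \frac12\left[1-2\,\overline M_{AH}(C_1,C_2)\right].$$
   Context: Two-class decision problem: classes $C_1,C_2$, an observation $x$ in a space $\mathrm X$ with density $p(x)$, and a posteriori probabilities $P(C_1\mid x),P(C_2\mid x)\ge0$ with $P(C_1\mid x)+P(C_2\mid x)=1$. $E_X\{g(x)\}=\int_{\mathrm X} g(x)p(x)\,dx$. $P_e=E_X\{\min(P(C_1\mid x),P(C_2\mid x))\}$ is the Bayesian probability of error. *)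

theory Defs
  imports "HOL-Analysis.Analysis"
begin

definition fAH :: "real \<Rightarrow> real" where
  "fAH x = (x + 1) / 2 - 2 * x / (x + 1)"

text \<open>Perspective transform on (0,1), extended by continuity to the endpoints
  (the limits at 0 and 1 are both 1/2).\<close>
definition fAH_star :: "real \<Rightarrow> real" where
  "fAH_star u = (if u = 0 \<or> u = 1 then 1 / 2 else u * fAH ((1 - u) / u))"

definition E_X :: "('a::euclidean_space \<Rightarrow> real) \<Rightarrow> ('a \<Rightarrow> real) \<Rightarrow> real" where
  "E_X p g = (\<integral>x. g x * p x \<partial>lborel)"

definition Pe :: "('a::euclidean_space \<Rightarrow> real) \<Rightarrow> ('a \<Rightarrow> real) \<Rightarrow> ('a \<Rightarrow> real) \<Rightarrow> real" where
  "Pe p P1 P2 = E_X p (\<lambda>x. min (P1 x) (P2 x))"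

definition M_AH :: "('a::euclidean_space \<Rightarrow> real) \<Rightarrow> ('a \<Rightarrow> real) \<Rightarrow> real" where
  "M_AH p P2 = E_X p (\<lambda>x. fAH_star (P2 x))"

end

theory Submission
  imports Defs
begin

text \<open>Pointwise, \<open>1/2 - f\<^sup>*\<^sub>A\<^sub>H(u) = 2 u (1 - u)\<close>, and this is at least \<open>min u (1 - u)\<close>
  because the larger of \<open>u\<close>, \<open>1 - u\<close> is at least \<open>1/2\<close>.\<close>

lemma fAH_star_eq:
  assumes "0 \<le> u" "u \<le> 1"
  shows "fAH_star u = (2 * u - 1)\<^sup>2 / 2"
  using assms unfolding fAH_star_def fAH_def
  by (cases "u = 0 \<or> u = 1") (auto simp: power2_eq_square field_simps)

lemma abs_fAH_star_le_one:
  assumes "0 \<le> u" "u \<le> 1"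
  shows "\<bar>fAH_star u\<bar> \<le> 1"
proof -
  have "\<bar>2 * u - 1\<bar> \<le> 1" using assms by linarith
  then have "(2 * u - 1)\<^sup>2 \<le> 1" by (metis abs_le_square_iff abs_one one_power2)
  then show ?thesis using assms by (simp add: fAH_star_eq)
qed

lemma min_le_half_minus_fAH_star:
  assumes "0 \<le> u" "u \<le> 1"
  shows "min u (1 - u) \<le> 1 / 2 - fAH_star u"
proof -
  have "1 / 2 - fAH_star u = 2 * u * (1 - u)"
    using assms by (simp add: fAH_star_eq power2_eq_square field_simps)
  moreover have "min u (1 - u) \<le> 2 * u * (1 - u)"
  proof (cases "u \<le> 1 / 2")
    case True
    then have "0 \<le> u * (1 - 2 * u)" using assms by simp
    then show ?thesis using True by (simp add: min_def algebra_simps)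
  next
    case False
    then have "0 \<le> (1 - u) * (2 * u - 1)" using assms by simp
    then show ?thesis using False by (simp add: min_def algebra_simps)
  qed
  ultimately show ?thesis by simp
qed

lemma integrable_bounded_mult:
  fixes p h :: "'a::euclidean_space \<Rightarrow> real"
  assumes "integrable lborel p" "h \<in> borel_measurable lborel" "\<And>x. \<bar>h x\<bar> \<le> 1"
  shows "integrable lborel (\<lambda>x. h x * p x)"
proof (rule Bochner_Integration.integrable_bound[OF assms(1)])
  show "(\<lambda>x. h x * p x) \<in> borel_measurable lborel"
    using assms(1,2) by measurable
  show "AE x in lborel. norm (h x * p x) \<le> norm (p x)"
    using assms(3) by (simp add: abs_mult mult_left_le_one_le)
qed

theorem mainTheorem9:
  fixes p :: "'a::euclidean_space \<Rightarrow> real"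
    and P1 P2 :: "'a \<Rightarrow> real"
  assumes p_meas: "p \<in> borel_measurable lborel"
    and p_nonneg: "\<And>x. p x \<ge> 0"
    and p_int: "integrable lborel p"
    and p_total: "(\<integral>x. p x \<partial>lborel) = 1"
    and P1_meas: "P1 \<in> borel_measurable lborel"
    and P2_meas: "P2 \<in> borel_measurable lborel"
    and P1_nonneg: "\<And>x. P1 x \<ge> 0"
    and P2_nonneg: "\<And>x. P2 x \<ge> 0"
    and P_sum: "\<And>x. P1 x + P2 x = 1"
  shows "Pe p P1 P2 \<le> 1 / 2 * (1 - 2 * M_AH p P2)"
proof -
  have P1_eq: "P1 x = 1 - P2 x" and P2_le: "P2 x \<le> 1" for x
    using P_sum[of x] P1_nonneg[of x] by auto
  have f_meas: "(\<lambda>x. fAH_star (P2 x)) \<in> borel_measurable lborel"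
    using P2_meas by (simp add: fAH_star_eq[OF P2_nonneg P2_le] cong: measurable_cong)
  have min_bound: "\<bar>min (P1 x) (P2 x)\<bar> \<le> 1" for x
    using P1_nonneg[of x] P2_nonneg[of x] P2_le[of x] by (simp add: P1_eq)
  have min_meas: "(\<lambda>x. min (P1 x) (P2 x)) \<in> borel_measurable lborel"
    using P1_meas P2_meas by measurable
  have int_min: "integrable lborel (\<lambda>x. min (P1 x) (P2 x) * p x)"
    by (rule integrable_bounded_mult[OF p_int min_meas min_bound])
  have int_f: "integrable lborel (\<lambda>x. fAH_star (P2 x) * p x)"
    using abs_fAH_star_le_one[OF P2_nonneg P2_le] by (intro integrable_bounded_mult[OF p_int f_meas])
  have "Pe p P1 P2 \<le> (\<integral>x. p x / 2 - fAH_star (P2 x) * p x \<partial>lborel)"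
    unfolding Pe_def E_X_def
  proof (rule integral_mono[OF int_min])
    show "integrable lborel (\<lambda>x. p x / 2 - fAH_star (P2 x) * p x)"
      using p_int int_f by simp
    show "min (P1 x) (P2 x) * p x \<le> p x / 2 - fAH_star (P2 x) * p x" for x
      using mult_right_mono[OF min_le_half_minus_fAH_star[OF P2_nonneg P2_le] p_nonneg, of x x]
      by (simp add: P1_eq min.commute algebra_simps)
  qed
  also have "\<dots> = 1 / 2 - M_AH p P2"
    using p_int int_f p_total by (simp add: M_AH_def E_X_def)
  finally show ?thesis by simp
qed

end
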